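(* Let $\|\cdot\|$ be a norm on $\mathbb{R}^K$. For every $\mathbf{w} = (\mathbf{w}_1,\mathbf{w}_2) \in \mathbb{R}^K\times\mathbb{R}^K$, \[ \min_{\boldsymbol{\alpha}\in\Delta(K)}\max_{\mathbf{l}\in[0,1]^K} \langle \mathbf{w}, (\boldsymbol{\alpha}\odot\mathbf{l},\mathbf{l})\rangle \le h_S(\mathbf{w}). \] That is, the Blackwell condition holds for the game with payoff $r(\boldsymbol{\alpha},\mathbf{l}) = (\boldsymbol{\alpha}\odot\mathbf{l},\mathbf{l})$ and target set $S$.
   Context: $\Delta(K) = \{\boldsymbol{\alpha}\in[0,1]^K : \sum_i\alpha_i = 1\}$; $\boldsymbol{\alpha}\odot\mathbf{l} = (\alpha_1 l_1,\dots,\alpha_K l_K)$; $C^*(\mathbf{l}) = \min_{\boldsymbol{\alpha}\in\Delta(K)}\|\boldsymbol{\alpha}\odot\mathbf{l}\|$; $S = \{(\mathbf{x},\mathbf{y})\in[0,1]^K\times[0,1]^K : \|\mathbf{x}\|\le C^*(\mathbf{y})\}$; $h_S(\mathbf{w}) = \sup_{\mathbf{s}\in S}\langle\mathbf{s},\mathbf{w}\rangle$ with inner product $\langle(\mathbf{a},\mathbf{b}),(\mathbf{c},\mathbf{d})\rangle = \langle\mathbf{a},\mathbf{c}\rangle+\langle\mathbf{b},\mathbf{d}\rangle$ on $\mathbb{R}^K\times\mathbb{R}^K$. *)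

theory Defs
  imports "HOL-Analysis.Analysis"
begin

definition is_norm :: "(real ^ 'k \<Rightarrow> real) \<Rightarrow> bool" where
  "is_norm N \<longleftrightarrow>
     (\<forall>x. 0 \<le> N x) \<and> (\<forall>x. N x = 0 \<longleftrightarrow> x = 0) \<and>
     (\<forall>c x. N (c *\<^sub>R x) = \<bar>c\<bar> * N x) \<and>
     (\<forall>x y. N (x + y) \<le> N x + N y)"

definition cubeK :: "(real ^ 'k) set" where
  "cubeK = {l. \<forall>i. 0 \<le> l $ i \<and> l $ i \<le> 1}"

definition simplexK :: "(real ^ 'k) set" where
  "simplexK = {a. (\<forall>i. 0 \<le> a $ i \<and> a $ i \<le> 1) \<and> (\<Sum>i\<in>UNIV. a $ i) = 1}"

definition hprod :: "real ^ 'k \<Rightarrow> real ^ 'k \<Rightarrow> real ^ 'k" where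
  "hprod a l = (\<chi> i. a $ i * l $ i)"

text \<open>C*(l) = min over the simplexK of N(alpha . l) (the minimum is attained).\<close>
definition Cstar :: "(real ^ 'k \<Rightarrow> real) \<Rightarrow> real ^ 'k \<Rightarrow> real" where
  "Cstar N l = (INF a\<in>simplexK. N (hprod a l))"

definition targetS :: "(real ^ 'k \<Rightarrow> real) \<Rightarrow> ((real ^ 'k) \<times> (real ^ 'k)) set" where
  "targetS N = {(x :: real ^ 'k, y :: real ^ 'k). x \<in> cubeK \<and> y \<in> cubeK \<and> N x \<le> Cstar N y}"

definition pinner :: "(real ^ 'k) \<times> (real ^ 'k) \<Rightarrow> (real ^ 'k) \<times> (real ^ 'k) \<Rightarrow> real" where
  "pinner s w = inner (fst s) (fst w) + inner (snd s) (snd w)"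

definition hS :: "(real ^ 'k \<Rightarrow> real) \<Rightarrow> (real ^ 'k) \<times> (real ^ 'k) \<Rightarrow> real" where
  "hS N w = (SUP s\<in>targetS N. pinner s w)"

end

theory Submission
  imports Defs
begin

text \<open>Writing the payoff as \<open>\<langle>\<alpha>, u l\<rangle>\<close> with \<open>(u l)\<^sub>i = w1\<^sub>i l\<^sub>i + \<langle>w2, l\<rangle>\<close>, the image \<open>U = u ` [0,1]^K\<close>
  is compact and convex. For each \<open>l\<close> a minimiser \<open>\<alpha>\<close> of \<open>C*(l)\<close> puts \<open>(\<alpha>\<odot>l, l)\<close> into \<open>S\<close>, so
  \<open>\<langle>\<alpha>, u l\<rangle> \<le> h\<^sub>S(w)\<close>; hence \<open>U\<close> misses the orthant of points with all coordinates \<open>\<ge> h\<^sub>S(w) + \<epsilon>\<close>.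
  A hyperplane separating \<open>U\<close> from this orthant has a nonnegative normal, which after
  normalisation is a single \<open>\<alpha> \<in> \<Delta>(K)\<close> with \<open>\<langle>\<alpha>, u l\<rangle> < h\<^sub>S(w) + \<epsilon>\<close> for all \<open>l\<close>.\<close>

lemma cubeK_eq_cbox: "(cubeK :: (real^'k) set) = cbox 0 1"
  by (auto simp: cubeK_def mem_box_cart)

lemma compact_cubeK: "compact (cubeK :: (real^'k) set)"
  by (simp add: cubeK_eq_cbox)

lemma compact_simplexK: "compact (simplexK :: (real^'k) set)"
proof -
  have "simplexK = (cubeK :: (real^'k) set) \<inter> {a. (\<Sum>i\<in>UNIV. a $ i) = 1}"
    by (auto simp: simplexK_def cubeK_def)
  moreover have "closed {a::real^'k. (\<Sum>i\<in>UNIV. a $ i) = 1}"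
    by (intro closed_Collect_eq continuous_intros)
  ultimately show ?thesis
    by (metis compact_cubeK compact_Int_closed)
qed

lemma uniform_in_simplexK: "(\<chi> i. 1 / real CARD('k)) \<in> (simplexK :: (real^'k) set)"
  by (auto simp: simplexK_def)

lemma scaleR_inverse_sum_in_simplexK:
  fixes c :: "real^'k"
  assumes nonneg: "\<And>i. 0 \<le> c $ i" and pos: "0 < (\<Sum>i\<in>UNIV. c $ i)"
  shows "(1 / (\<Sum>i\<in>UNIV. c $ i)) *\<^sub>R c \<in> simplexK"
proof -
  have "c $ i \<le> (\<Sum>i\<in>UNIV. c $ i)" for i
    by (rule member_le_sum) (auto simp: nonneg)
  moreover have "(\<Sum>i\<in>UNIV. c $ i / (\<Sum>i\<in>UNIV. c $ i)) = 1"
    using pos by (simp add: sum_divide_distrib[symmetric])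
  ultimately show ?thesis
    using pos nonneg by (simp add: simplexK_def)
qed

lemma inner_simplexK_ge:
  assumes "a \<in> simplexK" and "\<And>i. t \<le> q $ i"
  shows "t \<le> inner a q"
proof -
  have "(\<Sum>i\<in>UNIV. a $ i * t) \<le> (\<Sum>i\<in>UNIV. a $ i * q $ i)"
    using assms by (intro sum_mono mult_left_mono) (auto simp: simplexK_def)
  moreover have "(\<Sum>i\<in>UNIV. a $ i * t) = t"
    using assms(1) by (simp add: simplexK_def sum_distrib_right[symmetric])
  ultimately show ?thesis
    by (simp add: inner_vec_def)
qed

lemma hprod_in_cubeK: "a \<in> simplexK \<Longrightarrow> l \<in> cubeK \<Longrightarrow> hprod a l \<in> cubeK"
  by (auto simp: simplexK_def cubeK_def hprod_def mult_le_one)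

lemma convex_on_is_norm:
  assumes "is_norm N"
  shows "convex_on UNIV N"
proof (rule convex_onI)
  fix t :: real and x y
  assume t: "0 < t" "t < 1"
  have "N ((1 - t) *\<^sub>R x + t *\<^sub>R y) \<le> N ((1 - t) *\<^sub>R x) + N (t *\<^sub>R y)"
    using assms unfolding is_norm_def by blast
  also have "\<dots> = (1 - t) * N x + t * N y"
    using assms t by (simp add: is_norm_def)
  finally show "N ((1 - t) *\<^sub>R x + t *\<^sub>R y) \<le> (1 - t) * N x + t * N y" .
qed auto

lemma continuous_on_is_norm: "is_norm N \<Longrightarrow> continuous_on UNIV N"
  by (rule convex_on_continuous) (auto simp: convex_on_is_norm)

lemma Cstar_attained:
  fixes l :: "real^'k"
  assumes "is_norm N"
  shows "\<exists>a\<in>simplexK. N (hprod a l) \<le> Cstar N l"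
proof -
  have "continuous_on simplexK (\<lambda>a. N (hprod a l))"
    unfolding hprod_def
    by (rule continuous_on_compose2[OF continuous_on_is_norm[OF assms]])
       (auto intro!: continuous_intros)
  then obtain a where "a \<in> simplexK" "\<forall>b\<in>simplexK. N (hprod a l) \<le> N (hprod b l)"
    using continuous_attains_inf[OF compact_simplexK] uniform_in_simplexK by blast
  then show ?thesis
    unfolding Cstar_def using uniform_in_simplexK by (blast intro: cINF_greatest)
qed

lemma exists_simplexK_in_targetS:
  assumes "is_norm N" and "l \<in> cubeK"
  shows "\<exists>a\<in>simplexK. (hprod a l, l) \<in> targetS N"
  using Cstar_attained[OF assms(1)] hprod_in_cubeK assms(2) by (fastforce simp: targetS_def)

lemma pinner_commute: "pinner s w = pinner w s"
  by (simp add: pinner_def inner_commute)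

lemma bdd_above_pinner_cubeK:
  "bdd_above (pinner w ` (cubeK \<times> (cubeK :: (real^'k) set)))"
proof -
  have "compact (pinner w ` (cubeK \<times> (cubeK :: (real^'k) set)))"
    unfolding pinner_def
    by (intro compact_continuous_image compact_Times compact_cubeK continuous_intros)
  then show ?thesis
    by (simp add: bounded_imp_bdd_above compact_imp_bounded)
qed

lemma pinner_le_hS:
  assumes "s \<in> targetS N"
  shows "pinner w s \<le> hS N w"
proof -
  have "targetS N \<subseteq> cubeK \<times> cubeK"
    by (auto simp: targetS_def)
  then have "bdd_above ((\<lambda>s. pinner s w) ` targetS N)"
    unfolding pinner_commute[of _ w] using bdd_above_pinner_cubeK[of w]
    by (meson bdd_above_mono image_mono)
  then show ?thesis
    unfolding hS_def pinner_commute[of w] by (rule cSUP_upper[OF assms])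
qed

lemma pinner_hprod_eq_inner:
  assumes "a \<in> simplexK"
  shows "pinner (w1, w2) (hprod a l, l) = inner a (\<chi> i. w1 $ i * l $ i + inner w2 l)"
proof -
  have "inner a (\<chi> i. w1 $ i * l $ i + inner w2 l)
      = (\<Sum>i\<in>UNIV. a $ i * (w1 $ i * l $ i)) + (\<Sum>i\<in>UNIV. a $ i) * inner w2 l"
    by (simp add: inner_vec_def distrib_left sum.distrib sum_distrib_right)
  also have "\<dots> = pinner (w1, w2) (hprod a l, l)"
    using assms by (simp add: simplexK_def pinner_def inner_vec_def hprod_def mult_ac)
  finally show ?thesis by simp
qed

text \<open>Pushing a point of the orthant to infinity along a coordinate axis shows that a
  normal vector strictly separating the orthant from below has no negative component.\<close>

lemma orthant_separator_nonneg:
  fixes c :: "real^'k"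
  assumes sep: "\<And>q. (\<forall>i. t \<le> q $ i) \<Longrightarrow> b < inner c q"
  shows "0 \<le> c $ i"
proof (rule ccontr)
  assume neg: "\<not> 0 \<le> c $ i"
  define q0 :: "real^'k" where "q0 = (\<chi> j. t)"
  define s where "s = (\<bar>inner c q0\<bar> + \<bar>b\<bar> + 1) / (- c $ i)"
  have "0 \<le> s"
    using neg unfolding s_def by (intro divide_nonneg_nonneg) auto
  then have "b < inner c (q0 + s *\<^sub>R axis i 1)"
    by (intro sep) (simp add: q0_def axis_def)
  also have "\<dots> = inner c q0 + s * c $ i"
    by (simp add: inner_add_right inner_axis)
  also have "s * c $ i = - (\<bar>inner c q0\<bar> + \<bar>b\<bar> + 1)"
    using neg by (simp add: s_def)
  finally show False by linarith
qed

lemma simplexK_separation: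
  fixes U :: "(real^'k) set"
  assumes "convex U" "compact U" and disj: "U \<inter> {q. \<forall>i. t \<le> q $ i} = {}"
  shows "\<exists>a\<in>simplexK. \<forall>x\<in>U. inner a x < t"
proof (cases "U = {}")
  case True
  then show ?thesis using uniform_in_simplexK by blast
next
  case False
  define T :: "(real^'k) set" where "T = {q. \<forall>i. t \<le> q $ i}"
  have "T = (\<Inter>i. {q. inner (axis i 1) q \<ge> t})"
    by (auto simp: T_def cart_eq_inner_axis inner_commute)
  then have "convex T"
    by (auto intro: convex_INT convex_halfspace_ge)
  moreover have "closed T"
    unfolding T_def by (simp add: Collect_all_eq closed_INT closed_Collect_le continuous_on_component)
  ultimately obtain c b where below: "\<forall>x\<in>U. inner c x < b" and above: "\<forall>q\<in>T. b < inner c q"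
    using separating_hyperplane_compact_closed[OF assms(1,2) False] disj unfolding T_def by blast
  have nonneg: "0 \<le> c $ i" for i
    using above by (intro orthant_separator_nonneg[of t b]) (auto simp: T_def)
  define \<sigma> where "\<sigma> = (\<Sum>i\<in>UNIV. c $ i)"
  have "(\<chi> j. t) \<in> T"
    by (simp add: T_def)
  then have t_corner: "b < \<sigma> * t"
    using above by (auto simp: inner_vec_def \<sigma>_def sum_distrib_right)
  have "\<sigma> > 0"
  proof (rule ccontr)
    assume "\<not> \<sigma> > 0"
    then have "c = 0"
      using nonneg sum_nonneg_eq_0_iff[of UNIV "\<lambda>i. c $ i"] sum_nonneg[of UNIV "\<lambda>i. c $ i"]
      by (simp add: \<sigma>_def vec_eq_iff)
    moreover obtain x where "x \<in> U"
      using False by blast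
    ultimately show False
      using below t_corner by (auto simp: \<sigma>_def)
  qed
  have "inner ((1 / \<sigma>) *\<^sub>R c) x < t" if "x \<in> U" for x
  proof -
    have "inner c x < \<sigma> * t"
      using below that t_corner by fastforce
    then show ?thesis
      using \<open>\<sigma> > 0\<close> by (simp add: divide_less_eq mult.commute)
  qed
  then show ?thesis
    using scaleR_inverse_sum_in_simplexK[OF nonneg] \<open>\<sigma> > 0\<close> unfolding \<sigma>_def by blast
qed

lemma exists_simplexK_uniformly_below_hS:
  fixes w1 w2 :: "real^'k"
  assumes "is_norm N" and "e > 0"
  shows "\<exists>a\<in>simplexK. \<forall>l\<in>cubeK. pinner (w1, w2) (hprod a l, l) < hS N (w1, w2) + e"
proof -
  define u :: "real^'k \<Rightarrow> real^'k" where "u l = (\<chi> i. w1 $ i * l $ i + inner w2 l)" for l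
  have "linear u"
    by (rule linearI) (simp_all add: u_def vec_eq_iff inner_add_right algebra_simps)
  then have "convex (u ` cubeK)" "compact (u ` cubeK)"
    by (simp_all add: convex_linear_image cubeK_eq_cbox compact_continuous_image linear_continuous_on
        linear_linear)
  moreover have "u ` cubeK \<inter> {q. \<forall>i. hS N (w1, w2) + e \<le> q $ i} = {}"
  proof -
    have "inner a (u l) \<le> hS N (w1, w2)" if "a \<in> simplexK" "(hprod a l, l) \<in> targetS N" for a l
      using pinner_le_hS[OF that(2), of "(w1, w2)"] pinner_hprod_eq_inner[OF that(1), of w1 w2 l]
      by (simp add: u_def)
    then show ?thesis
      using exists_simplexK_in_targetS[OF assms(1)] inner_simplexK_ge assms(2)
      by (fastforce simp: not_le[symmetric])
  qed
  ultimately obtain a where a: "a \<in> simplexK" "\<forall>x\<in>u ` cubeK. inner a x < hS N (w1, w2) + e"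
    using simplexK_separation by blast
  then have "\<forall>l\<in>cubeK. pinner (w1, w2) (hprod a l, l) < hS N (w1, w2) + e"
    using pinner_hprod_eq_inner[OF a(1)] by (simp add: u_def)
  then show ?thesis
    using a(1) by blast
qed

theorem lemma1:
  fixes N :: "real ^ 'k \<Rightarrow> real" and w1 w2 :: "real ^ 'k"
  assumes "is_norm N"
  shows "(INF a\<in>simplexK. SUP l\<in>cubeK. pinner (w1, w2) (hprod a l, l)) \<le> hS N (w1, w2)"
proof (rule field_le_epsilon)
  let ?payoff = "\<lambda>a l. pinner (w1, w2) (hprod a l, l)"
  have zero_in_cube: "0 \<in> cubeK"
    by (simp add: cubeK_def)
  have payoff_bdd_above: "bdd_above (?payoff a ` cubeK)" if "a \<in> simplexK" for a
    using bdd_above_pinner_cubeK[of "(w1, w2)"]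
    by (rule bdd_above_mono) (auto intro: hprod_in_cubeK[OF that])
  have "0 \<le> (SUP l\<in>cubeK. ?payoff a l)" if "a \<in> simplexK" for a
    using cSUP_upper[OF zero_in_cube payoff_bdd_above[OF that]]
    by (simp add: pinner_def hprod_def inner_vec_def)
  then have payoff_sup_bdd_below: "bdd_below ((\<lambda>a. SUP l\<in>cubeK. ?payoff a l) ` simplexK)"
    by (rule bdd_belowI2)
  fix e :: real
  assume "e > 0"
  then obtain a where a: "a \<in> simplexK" "\<forall>l\<in>cubeK. ?payoff a l < hS N (w1, w2) + e"
    using exists_simplexK_uniformly_below_hS[OF assms] by blast
  have "(INF a\<in>simplexK. SUP l\<in>cubeK. ?payoff a l) \<le> (SUP l\<in>cubeK. ?payoff a l)"
    using payoff_sup_bdd_below a(1) by (rule cINF_lower)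
  also have "\<dots> \<le> hS N (w1, w2) + e"
    using a(2) zero_in_cube by (intro cSUP_least) (auto intro: less_imp_le)
  finally show "(INF a\<in>simplexK. SUP l\<in>cubeK. ?payoff a l) \<le> hS N (w1, w2) + e" .
qed

end
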